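(* Let $n>1$ and $m\geq 1$ be natural numbers, and let $p$ be one of the $m$ propositional variables of $\mathcal{L}(n,m)$. Then the formula $[1]p$ is unifiable in $\mathbf{GLP}_n$ but has no maximal unifiers in $\mathbf{GLP}_n$. Consequently, $\mathbf{GLP}_n$ (in the language $\mathcal{L}(n,m)$) has nullary unification type.
   Context: $\mathcal{L}(n,m)$ is the language of propositional polymodal logic with modalities $[0],\dots,[n-1]$ and variables $p_0,\dots,p_{m-1}$; $\langle k\rangle\phi$ abbreviates $\neg[k]\neg\phi$. $\mathbf{GLP}$ is the polymodal logic with modalities $[0],[1],[2],\dots$ axiomatized by: classical tautologies; $[k](\phi\to\psi)\to([k]\phi\to[k]\psi)$; $[k]([k]\phi\to\phi)\to[k]\phi$; $\langle j\rangle\phi\to[k]\langle j\rangle\phi$ for $j<k$; $[j]\phi\to[k]\phi$ for $j\leq k$; with rules modus ponens and necessitation ($\vdash\phi\Rightarrow\vdash[k]\phi$). $\mathbf{GLP}_n$ is the same system restricted to the modalities $[0],\dots,[n-1]$. A substitution is a map on formulas commuting with all connectives and modalities. A unifier of $\phi$ in a logic $L$ is a substitution $\sigma$ with $L\vdash\sigma(\phi)$. For unifiers, $\tau\leq\sigma$ means there is a substitution $\theta$ with $L\vdash\tau(p)\leftrightarrow\theta(\sigma(p))$ for all variables $p$; $\sigma<\tau$ means $\sigma\leq\tau$ and not $\tau\leq\sigma$. A unifier $\sigma$ of $\phi$ is maximal if there is no unifier $\tau$ of $\phi$ with $\sigma<\tau$. $L$ has finitary (resp. infinitary) unification type if every unifiable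 formula has a finite (resp. infinite) complete set of maximal unifiers (a set $\Sigma$ of unifiers such that every unifier is $\leq$ some member of $\Sigma$); $L$ has nullary unification type if it is neither finitary nor infinitary. *)

theory Defs
  imports Main
begin

datatype fm = Var nat | Bot | Imp fm fm | Box nat fm

definition Neg :: "fm \<Rightarrow> fm" where "Neg a = Imp a Bot"
definition Conj :: "fm \<Rightarrow> fm \<Rightarrow> fm" where "Conj a b = Neg (Imp a (Neg b))"
definition Iff :: "fm \<Rightarrow> fm \<Rightarrow> fm" where "Iff a b = Conj (Imp a b) (Imp b a)"
definition Dia :: "nat \<Rightarrow> fm \<Rightarrow> fm" where "Dia k a = Neg (Box k (Neg a))"

fun in_lang :: "nat \<Rightarrow> nat \<Rightarrow> fm \<Rightarrow> bool" where
  "in_lang n m (Var i) = (i < m)"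
| "in_lang n m Bot = True"
| "in_lang n m (Imp a b) = (in_lang n m a \<and> in_lang n m b)"
| "in_lang n m (Box k a) = (k < n \<and> in_lang n m a)"

text \<open>Classical tautologies: boxed subformulas are treated as propositional atoms.\<close>
fun peval :: "(fm \<Rightarrow> bool) \<Rightarrow> fm \<Rightarrow> bool" where
  "peval v (Var i) = v (Var i)"
| "peval v Bot = False"
| "peval v (Imp a b) = (peval v a \<longrightarrow> peval v b)"
| "peval v (Box k a) = v (Box k a)"

definition taut :: "fm \<Rightarrow> bool" where "taut a = (\<forall>v. peval v a)"

inductive GLP :: "nat \<Rightarrow> nat \<Rightarrow> fm \<Rightarrow> bool" for n m where
  tautI: "in_lang n m a \<Longrightarrow> taut a \<Longrightarrow> GLP n m a"
| axK: "k < n \<Longrightarrow> in_lang n m a \<Longrightarrow> in_lang n m b \<Longrightarrow>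
          GLP n m (Imp (Box k (Imp a b)) (Imp (Box k a) (Box k b)))"
| axL: "k < n \<Longrightarrow> in_lang n m a \<Longrightarrow>
          GLP n m (Imp (Box k (Imp (Box k a) a)) (Box k a))"
| axDia: "j < k \<Longrightarrow> k < n \<Longrightarrow> in_lang n m a \<Longrightarrow>
          GLP n m (Imp (Dia j a) (Box k (Dia j a)))"
| axMono: "j \<le> k \<Longrightarrow> k < n \<Longrightarrow> in_lang n m a \<Longrightarrow>
          GLP n m (Imp (Box j a) (Box k a))"
| mp: "GLP n m (Imp a b) \<Longrightarrow> GLP n m a \<Longrightarrow> GLP n m b"
| nec: "k < n \<Longrightarrow> GLP n m a \<Longrightarrow> GLP n m (Box k a)"

fun subst :: "(nat \<Rightarrow> fm) \<Rightarrow> fm \<Rightarrow> fm" where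
  "subst s (Var i) = s i"
| "subst s Bot = Bot"
| "subst s (Imp a b) = Imp (subst s a) (subst s b)"
| "subst s (Box k a) = Box k (subst s a)"

definition is_subst :: "nat \<Rightarrow> nat \<Rightarrow> (nat \<Rightarrow> fm) \<Rightarrow> bool" where
  "is_subst n m s = ((\<forall>i<m. in_lang n m (s i)) \<and> (\<forall>i\<ge>m. s i = Var i))"

definition unifier :: "nat \<Rightarrow> nat \<Rightarrow> (nat \<Rightarrow> fm) \<Rightarrow> fm \<Rightarrow> bool" where
  "unifier n m s a = (is_subst n m s \<and> GLP n m (subst s a))"

definition unifiable :: "nat \<Rightarrow> nat \<Rightarrow> fm \<Rightarrow> bool" where
  "unifiable n m a = (\<exists>s. unifier n m s a)"

definition less_gen :: "nat \<Rightarrow> nat \<Rightarrow> (nat \<Rightarrow> fm) \<Rightarrow> (nat \<Rightarrow> fm) \<Rightarrow> bool" where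
  "less_gen n m t s = (\<exists>th. is_subst n m th \<and>
      (\<forall>i<m. GLP n m (Iff (t i) (subst th (s i)))))"

definition strictly_less_gen :: "nat \<Rightarrow> nat \<Rightarrow> (nat \<Rightarrow> fm) \<Rightarrow> (nat \<Rightarrow> fm) \<Rightarrow> bool" where
  "strictly_less_gen n m s t = (less_gen n m s t \<and> \<not> less_gen n m t s)"

definition maximal_unifier :: "nat \<Rightarrow> nat \<Rightarrow> (nat \<Rightarrow> fm) \<Rightarrow> fm \<Rightarrow> bool" where
  "maximal_unifier n m s a = (unifier n m s a \<and>
      \<not> (\<exists>t. unifier n m t a \<and> strictly_less_gen n m s t))"

definition complete_max_set :: "nat \<Rightarrow> nat \<Rightarrow> (nat \<Rightarrow> fm) set \<Rightarrow> fm \<Rightarrow> bool" where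
  "complete_max_set n m S a = ((\<forall>s\<in>S. maximal_unifier n m s a) \<and>
      (\<forall>t. unifier n m t a \<longrightarrow> (\<exists>s\<in>S. less_gen n m t s)))"

definition finitary :: "nat \<Rightarrow> nat \<Rightarrow> bool" where
  "finitary n m = (\<forall>a. in_lang n m a \<and> unifiable n m a \<longrightarrow>
      (\<exists>S. finite S \<and> complete_max_set n m S a))"

definition infinitary :: "nat \<Rightarrow> nat \<Rightarrow> bool" where
  "infinitary n m = (\<forall>a. in_lang n m a \<and> unifiable n m a \<longrightarrow>
      (\<exists>S. infinite S \<and> complete_max_set n m S a))"

definition nullary :: "nat \<Rightarrow> nat \<Rightarrow> bool" where
  "nullary n m = (\<not> finitary n m \<and> \<not> infinitary n m)"

end

theory Submission
  imports Defs
begin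

(*
  Write dia_chain x J \<top> for \<not>x \<and> \<langle>0\<rangle>(\<not>x \<and> \<langle>0\<rangle>(\<dots> \<top>)) with J diamonds. Since
  \<turnstile> [1]([0]c \<rightarrow> c), every substitution w J : p \<mapsto> p \<or> dia_chain p J \<top> unifies [1]p.
  Conversely, if \<sigma> unifies [1]p then \<turnstile> \<not>dia_chain (\<sigma> p) J \<top> for some J: otherwise a
  canonical-model argument produces an infinite \<langle>0\<rangle>-chain of maximal consistent sets
  through \<not>\<sigma> p that refutes [1]\<sigma> p. For such J, \<sigma> is an instance of w (J + 1) (via \<sigma>
  itself), while w (J + 1) is not an instance of \<sigma>, as the frame (\<nat>, >) with all variables
  false shows. So no unifier of [1]p is maximal, and a unifiable formula without maximal
  unifiers has no complete set of maximal unifiers, finite or infinite.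
*)

definition Top :: fm where "Top = Imp Bot Bot"
definition Disj :: "fm \<Rightarrow> fm \<Rightarrow> fm" where "Disj a b = Imp (Neg a) b"

lemma peval_connectives [simp]:
  "peval v (Neg a) = (\<not> peval v a)"
  "peval v (Conj a b) = (peval v a \<and> peval v b)"
  "peval v (Iff a b) = (peval v a = peval v b)"
  "peval v (Disj a b) = (peval v a \<or> peval v b)"
  "peval v Top"
  "peval v (Dia k a) = (\<not> v (Box k (Neg a)))"
  by (auto simp: Dia_def Neg_def Conj_def Iff_def Disj_def Top_def)

lemma in_lang_connectives [simp]:
  "in_lang n m (Neg a) = in_lang n m a"
  "in_lang n m (Conj a b) = (in_lang n m a \<and> in_lang n m b)"
  "in_lang n m (Iff a b) = (in_lang n m a \<and> in_lang n m b)"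
  "in_lang n m (Disj a b) = (in_lang n m a \<and> in_lang n m b)"
  "in_lang n m (Dia k a) = (k < n \<and> in_lang n m a)"
  "in_lang n m Top"
  by (auto simp: Neg_def Conj_def Iff_def Disj_def Top_def Dia_def)

lemma subst_connectives [simp]:
  "subst s (Neg a) = Neg (subst s a)"
  "subst s (Conj a b) = Conj (subst s a) (subst s b)"
  "subst s (Iff a b) = Iff (subst s a) (subst s b)"
  "subst s (Disj a b) = Disj (subst s a) (subst s b)"
  "subst s (Dia k a) = Dia k (subst s a)"
  "subst s Top = Top"
  by (auto simp: Neg_def Conj_def Iff_def Disj_def Top_def Dia_def)

lemma GLP_in_lang: "GLP n m a \<Longrightarrow> in_lang n m a"
  by (induction rule: GLP.induct) (auto simp: Dia_def Neg_def)

fun imps :: "fm list \<Rightarrow> fm \<Rightarrow> fm" where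
  "imps [] b = b"
| "imps (a # as) b = Imp a (imps as b)"

lemma peval_imps: "peval v (imps as b) = ((\<forall>a\<in>set as. peval v a) \<longrightarrow> peval v b)"
  by (induction as) auto

lemma in_lang_imps: "in_lang n m (imps as b) = ((\<forall>a\<in>set as. in_lang n m a) \<and> in_lang n m b)"
  by (induction as) auto

lemma GLP_imps_mp: "GLP n m (imps as b) \<Longrightarrow> \<forall>a\<in>set as. GLP n m a \<Longrightarrow> GLP n m b"
  by (induction as) (auto intro: GLP.mp)

lemma GLP_prop_rule:
  assumes "\<forall>a\<in>set as. GLP n m a" and "in_lang n m b"
    and "\<forall>v. (\<forall>a\<in>set as. peval v a) \<longrightarrow> peval v b"
  shows "GLP n m b"
proof -
  have "GLP n m (imps as b)"
    using assms GLP_in_lang by (intro GLP.tautI) (auto simp: in_lang_imps taut_def peval_imps)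
  then show ?thesis using assms(1) by (rule GLP_imps_mp)
qed

lemma GLP_tautology: "in_lang n m b \<Longrightarrow> \<forall>v. peval v b \<Longrightarrow> GLP n m b"
  by (rule GLP_prop_rule[of "[]"]) auto

lemma GLP_prop_rule1:
  "GLP n m a \<Longrightarrow> in_lang n m b \<Longrightarrow> \<forall>v. peval v a \<longrightarrow> peval v b \<Longrightarrow> GLP n m b"
  by (rule GLP_prop_rule[of "[a]"]) auto

lemma GLP_prop_rule2:
  "GLP n m a \<Longrightarrow> GLP n m a' \<Longrightarrow> in_lang n m b \<Longrightarrow>
   \<forall>v. peval v a \<longrightarrow> peval v a' \<longrightarrow> peval v b \<Longrightarrow> GLP n m b"
  by (rule GLP_prop_rule[of "[a, a']"]) auto

lemma GLP_prop_rule3: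
  "GLP n m a \<Longrightarrow> GLP n m a' \<Longrightarrow> GLP n m a'' \<Longrightarrow> in_lang n m b \<Longrightarrow>
   \<forall>v. peval v a \<longrightarrow> peval v a' \<longrightarrow> peval v a'' \<longrightarrow> peval v b \<Longrightarrow> GLP n m b"
  by (rule GLP_prop_rule[of "[a, a', a'']"]) auto

lemma GLP_Neg_of_imps_Bot:
  assumes "GLP n m (imps xs Bot)" and "\<forall>x\<in>set xs. GLP n m (Imp c x)" and "in_lang n m c"
  shows "GLP n m (Neg c)"
  by (rule GLP_prop_rule[of "imps xs Bot # map (Imp c) xs"]) (use assms in \<open>auto simp: peval_imps\<close>)

lemma GLP_box_mono: "GLP n m (Imp a b) \<Longrightarrow> k < n \<Longrightarrow> GLP n m (Imp (Box k a) (Box k b))"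
  using GLP_in_lang[of n m "Imp a b"] GLP.nec[of k n m "Imp a b"] GLP.axK[of k n m a b] GLP.mp
  by auto

lemma GLP_box_mono2:
  assumes "GLP n m (Imp a (Imp b c))" and k: "k < n"
  shows "GLP n m (Imp (Box k a) (Imp (Box k b) (Box k c)))"
proof -
  have "GLP n m (Imp (Box k a) (Box k (Imp b c)))" using assms by (rule GLP_box_mono)
  moreover have l: "in_lang n m a" "in_lang n m b" "in_lang n m c"
    using GLP_in_lang[OF assms(1)] by auto
  then have "GLP n m (Imp (Box k (Imp b c)) (Imp (Box k b) (Box k c)))" using GLP.axK k by blast
  ultimately show ?thesis by (rule GLP_prop_rule2) (use l k in auto)
qed

text \<open>Axiom 4 follows from L, applied to the conjunction of a and [k]a.\<close>
lemma GLP_box_box: "k < n \<Longrightarrow> in_lang n m a \<Longrightarrow> GLP n m (Imp (Box k a) (Box k (Box k a)))"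
proof -
  assume k: "k < n" and a: "in_lang n m a"
  define c where "c = Conj a (Box k a)"
  have lc: "in_lang n m c" using k a by (simp add: c_def)
  have c_a: "GLP n m (Imp (Box k c) (Box k a))"
    by (rule GLP_box_mono[OF _ k], rule GLP_tautology) (use lc a in \<open>auto simp: c_def\<close>)
  have c_box: "GLP n m (Imp (Box k c) (Box k (Box k a)))"
    by (rule GLP_box_mono[OF _ k], rule GLP_tautology) (use lc a k in \<open>auto simp: c_def\<close>)
  have "GLP n m (Imp a (Imp (Box k c) c))"
    by (rule GLP_prop_rule1[OF c_a]) (use lc a k in \<open>auto simp: c_def\<close>)
  then have "GLP n m (Imp (Box k a) (Box k (Imp (Box k c) c)))" using k by (rule GLP_box_mono)
  moreover have "GLP n m (Imp (Box k (Imp (Box k c) c)) (Box k c))" using GLP.axL[OF k lc] .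
  ultimately show ?thesis by (rule GLP_prop_rule3[OF _ _ c_box]) (use a k in auto)
qed

lemma GLP_dia_mono: "GLP n m (Imp a b) \<Longrightarrow> k < n \<Longrightarrow> GLP n m (Imp (Dia k a) (Dia k b))"
proof -
  assume ab: "GLP n m (Imp a b)" and k: "k < n"
  have l: "in_lang n m a" "in_lang n m b" using GLP_in_lang[OF ab] by auto
  have "GLP n m (Imp (Neg b) (Neg a))" by (rule GLP_prop_rule1[OF ab]) (use l in auto)
  then have "GLP n m (Imp (Box k (Neg b)) (Box k (Neg a)))" using k by (rule GLP_box_mono)
  then show ?thesis by (rule GLP_prop_rule1) (use l k in auto)
qed

lemma GLP_dia_dia: "k < n \<Longrightarrow> in_lang n m a \<Longrightarrow> GLP n m (Imp (Dia k (Dia k a)) (Dia k a))"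
proof -
  assume k: "k < n" and a: "in_lang n m a"
  have "GLP n m (Imp (Box k (Neg a)) (Box k (Box k (Neg a))))" using GLP_box_box k a by simp
  moreover have "GLP n m (Imp (Box k (Box k (Neg a))) (Box k (Neg (Dia k a))))"
    by (rule GLP_box_mono[OF _ k], rule GLP_tautology) (use a k in auto)
  ultimately show ?thesis by (rule GLP_prop_rule2) (use a k in auto)
qed

lemma GLP_dia_disj: "k < n \<Longrightarrow> in_lang n m a \<Longrightarrow> in_lang n m b \<Longrightarrow>
   GLP n m (Imp (Dia k (Disj a b)) (Disj (Dia k a) (Dia k b)))"
proof -
  assume k: "k < n" and a: "in_lang n m a" and b: "in_lang n m b"
  have "GLP n m (Imp (Neg a) (Imp (Neg b) (Neg (Disj a b))))"
    by (rule GLP_tautology) (use a b in auto)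
  then have "GLP n m (Imp (Box k (Neg a)) (Imp (Box k (Neg b)) (Box k (Neg (Disj a b)))))"
    using k by (rule GLP_box_mono2)
  then show ?thesis by (rule GLP_prop_rule1) (use a b k in auto)
qed

text \<open>Split on [0]c: if it holds, then [1]c by monotonicity; if not, then
  \<langle>0\<rangle>\<not>c, which is [1]-persistent.\<close>
lemma GLP_box1_reflection0:
  assumes n: "1 < n" and c: "in_lang n m c"
  shows "GLP n m (Box 1 (Imp (Box 0 c) c))"
proof -
  have nn: "GLP n m (Imp (Box 0 (Neg (Neg c))) (Box 0 c))"
    by (rule GLP_box_mono, rule GLP_tautology) (use n c in auto)
  have "GLP n m (Imp (Box 0 c) (Box 0 (Neg (Neg c))))"
    by (rule GLP_box_mono, rule GLP_tautology) (use n c in auto)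
  then have "GLP n m (Imp (Dia 0 (Neg c)) (Imp (Box 0 c) c))"
    by (rule GLP_prop_rule1) (use n c in auto)
  then have box1: "GLP n m (Imp (Box 1 (Dia 0 (Neg c))) (Box 1 (Imp (Box 0 c) c)))"
    using n by (intro GLP_box_mono) auto
  have "GLP n m (Imp (Dia 0 (Neg c)) (Box 1 (Dia 0 (Neg c))))"
    using GLP.axDia[of 0 1 n m "Neg c"] n c by simp
  then have not_box0: "GLP n m (Imp (Neg (Box 0 (Neg (Neg c)))) (Box 1 (Imp (Box 0 c) c)))"
    by (rule GLP_prop_rule2[OF _ box1]) (use n c in auto)
  have "GLP n m (Imp (Box 0 c) (Box 1 c))" using GLP.axMono[of 0 1 n m c] n c by simp
  moreover have "GLP n m (Imp (Box 1 c) (Box 1 (Imp (Box 0 c) c)))"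
    by (rule GLP_box_mono, rule GLP_tautology) (use n c in auto)
  ultimately have "GLP n m (Imp (Box 0 (Neg (Neg c))) (Box 1 (Imp (Box 0 c) c)))"
    by (rule GLP_prop_rule3[OF nn]) (use n c in auto)
  then show ?thesis by (rule GLP_prop_rule2[OF not_box0]) (use n c in auto)
qed

subsection \<open>Chains of \<open>\<langle>0\<rangle>\<close>-steps avoiding a formula\<close>

definition dia_chain :: "fm \<Rightarrow> nat \<Rightarrow> fm \<Rightarrow> fm" where
  "dia_chain x j y = ((\<lambda>z. Conj (Neg x) (Dia 0 z)) ^^ j) y"

lemma dia_chain_0 [simp]: "dia_chain x 0 y = y"
  by (simp add: dia_chain_def)

lemma dia_chain_Suc [simp]: "dia_chain x (Suc j) y = Conj (Neg x) (Dia 0 (dia_chain x j y))"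
  by (simp add: dia_chain_def)

lemma dia_chain_Suc_right: "dia_chain x (Suc j) y = dia_chain x j (Conj (Neg x) (Dia 0 y))"
  unfolding dia_chain_def by (simp only: funpow_Suc_right comp_def)

lemma in_lang_dia_chain:
  "0 < n \<Longrightarrow> in_lang n m x \<Longrightarrow> in_lang n m y \<Longrightarrow> in_lang n m (dia_chain x j y)"
  by (induction j) auto

lemma subst_dia_chain: "subst s (dia_chain x j y) = dia_chain (subst s x) j (subst s y)"
  by (induction j) auto

definition chain_unifier :: "nat \<Rightarrow> nat \<Rightarrow> nat \<Rightarrow> fm" where
  "chain_unifier p J = (\<lambda>i. if i = p then Disj (Var p) (dia_chain (Var p) J Top) else Var i)"

lemma GLP_box1_chain_unifier:
  assumes n: "1 < n" and p: "p < m"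
  shows "GLP n m (Box 1 (Disj (Var p) (dia_chain (Var p) J Top)))"
proof (induction J)
  case 0
  have "GLP n m (Disj (Var p) Top)" by (rule GLP_tautology) (use p in auto)
  then show ?case using GLP.nec n by simp
next
  case (Suc J)
  txt \<open>Under [1], reflection [0]\<not>c \<rightarrow> \<not>c turns c into \<langle>0\<rangle>c.\<close>
  define c where "c = dia_chain (Var p) J Top"
  have lc: "in_lang n m c" unfolding c_def using n p by (intro in_lang_dia_chain) auto
  have "GLP n m (Imp (Disj (Var p) c) (Imp (Imp (Box 0 (Neg c)) (Neg c))
          (Disj (Var p) (Conj (Neg (Var p)) (Dia 0 c)))))"
    by (rule GLP_tautology) (use n p lc in auto)
  then have "GLP n m (Imp (Box 1 (Disj (Var p) c)) (Imp (Box 1 (Imp (Box 0 (Neg c)) (Neg c)))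
          (Box 1 (Disj (Var p) (Conj (Neg (Var p)) (Dia 0 c))))))"
    using n by (intro GLP_box_mono2) auto
  moreover have "GLP n m (Box 1 (Disj (Var p) c))" using Suc by (simp add: c_def)
  moreover have "GLP n m (Box 1 (Imp (Box 0 (Neg c)) (Neg c)))"
    using GLP_box1_reflection0 n lc by simp
  ultimately have "GLP n m (Box 1 (Disj (Var p) (Conj (Neg (Var p)) (Dia 0 c))))"
    by (meson GLP.mp)
  then show ?case by (simp add: c_def)
qed

lemma unifier_chain_unifier:
  "1 < n \<Longrightarrow> p < m \<Longrightarrow> unifier n m (chain_unifier p J) (Box 1 (Var p))"
  using GLP_box1_chain_unifier[of n p m J]
  by (auto simp: unifier_def is_subst_def chain_unifier_def intro!: in_lang_dia_chain)

subsection \<open>The frame of the natural numbers\<close>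

text \<open>[0] ranges over smaller numbers, so Loeb's axiom holds by well-founded induction; the
  relations for [k], k > 0, are empty, which validates the remaining axioms trivially.\<close>
fun nat_holds :: "(nat \<Rightarrow> nat \<Rightarrow> bool) \<Rightarrow> nat \<Rightarrow> fm \<Rightarrow> bool" where
  "nat_holds V x (Var i) = V i x"
| "nat_holds V x Bot = False"
| "nat_holds V x (Imp a b) = (nat_holds V x a \<longrightarrow> nat_holds V x b)"
| "nat_holds V x (Box k a) = (k = 0 \<longrightarrow> (\<forall>y<x. nat_holds V y a))"

lemma nat_holds_connectives [simp]:
  "nat_holds V x (Neg a) = (\<not> nat_holds V x a)"
  "nat_holds V x (Conj a b) = (nat_holds V x a \<and> nat_holds V x b)"
  "nat_holds V x (Iff a b) = (nat_holds V x a = nat_holds V x b)"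
  "nat_holds V x (Disj a b) = (nat_holds V x a \<or> nat_holds V x b)"
  "nat_holds V x Top"
  "nat_holds V x (Dia k a) = (k = 0 \<and> (\<exists>y<x. nat_holds V y a))"
  by (auto simp: Dia_def Neg_def Conj_def Iff_def Disj_def Top_def)

lemma peval_nat_holds: "peval (nat_holds V x) a = nat_holds V x a"
  by (induction a) auto

lemma nat_holds_sound: "GLP n m a \<Longrightarrow> nat_holds V x a"
proof (induction arbitrary: x rule: GLP.induct)
  case (tautI a)
  then show ?case by (simp add: taut_def flip: peval_nat_holds)
next
  case (axL k a)
  have "nat_holds V y a"
    if step: "\<forall>y<x. (\<forall>z<y. nat_holds V z a) \<longrightarrow> nat_holds V y a" and "y < x" for y
    using \<open>y < x\<close>
  proof (induction y rule: less_induct)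
    case (less y)
    then have "\<forall>z<y. nat_holds V z a" using order.strict_trans by blast
    then show ?case using step less.prems by blast
  qed
  then show ?case by (simp (no_asm_use)) blast
next
  case (axDia j k a)
  then show ?case by simp
qed simp_all

lemma nat_holds_subst: "nat_holds V x (subst s a) = nat_holds (\<lambda>i y. nat_holds V y (s i)) x a"
  by (induction a arbitrary: x) auto

lemma nat_holds_dia_chain:
  assumes "\<forall>y\<le>x. \<not> nat_holds V y c"
  shows "nat_holds V x (dia_chain c j Top) = (j \<le> x)"
  using assms
proof (induction j arbitrary: x)
  case (Suc j)
  have "(\<exists>y<x. nat_holds V y (dia_chain c j Top)) = (\<exists>y<x. j \<le> y)"
    using Suc.IH Suc.prems by (metis less_imp_le_nat order.trans)
  also have "\<dots> = (Suc j \<le> x)" by (auto intro: exI[of _ j])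
  finally show ?case using Suc.prems by auto
qed simp

subsection \<open>Maximal consistent sets\<close>

definition consistent :: "nat \<Rightarrow> nat \<Rightarrow> fm set \<Rightarrow> bool" where
  "consistent n m X \<longleftrightarrow>
     X \<subseteq> {a. in_lang n m a} \<and> (\<forall>xs. set xs \<subseteq> X \<longrightarrow> \<not> GLP n m (imps xs Bot))"

definition max_consistent :: "nat \<Rightarrow> nat \<Rightarrow> fm set \<Rightarrow> bool" where
  "max_consistent n m X \<longleftrightarrow> consistent n m X \<and> (\<forall>a. in_lang n m a \<longrightarrow> a \<in> X \<or> Neg a \<in> X)"

lemma max_consistent_in_lang: "max_consistent n m X \<Longrightarrow> a \<in> X \<Longrightarrow> in_lang n m a"
  by (auto simp: max_consistent_def consistent_def)

lemma max_consistent_derives: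
  assumes X: "max_consistent n m X" and xs: "set xs \<subseteq> X" and d: "GLP n m (imps xs b)"
  shows "b \<in> X"
proof (rule ccontr)
  assume "b \<notin> X"
  moreover have "in_lang n m b" using GLP_in_lang[OF d] by (simp add: in_lang_imps)
  ultimately have "set (Neg b # xs) \<subseteq> X" using X xs by (auto simp: max_consistent_def)
  moreover have "GLP n m (imps (Neg b # xs) Bot)"
    by (rule GLP_prop_rule1[OF d]) (use GLP_in_lang[OF d] in \<open>auto simp: in_lang_imps peval_imps\<close>)
  ultimately show False using X unfolding max_consistent_def consistent_def by blast
qed

lemma max_consistent_GLP: "max_consistent n m X \<Longrightarrow> GLP n m a \<Longrightarrow> a \<in> X"
  using max_consistent_derives[of n m X "[]" a] by simp

lemma max_consistent_mp:
  "max_consistent n m X \<Longrightarrow> a \<in> X \<Longrightarrow> GLP n m (Imp a b) \<Longrightarrow> b \<in> X"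
  using max_consistent_derives[of n m X "[a]" b] by simp

lemma max_consistent_mp2:
  "max_consistent n m X \<Longrightarrow> a \<in> X \<Longrightarrow> a' \<in> X \<Longrightarrow> GLP n m (Imp a (Imp a' b)) \<Longrightarrow> b \<in> X"
  using max_consistent_derives[of n m X "[a, a']" b] by simp

lemma max_consistent_Neg_iff:
  assumes X: "max_consistent n m X" and a: "in_lang n m a"
  shows "Neg a \<in> X \<longleftrightarrow> a \<notin> X"
proof (intro iffI notI)
  assume "Neg a \<in> X" "a \<in> X"
  then have "set [a, Neg a] \<subseteq> X" by simp
  moreover have "GLP n m (imps [a, Neg a] Bot)" by (rule GLP_tautology) (use a in auto)
  ultimately show False using X unfolding max_consistent_def consistent_def by blast
qed (use X a in \<open>auto simp: max_consistent_def\<close>)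

lemma inconsistent_insert:
  assumes "X \<subseteq> {a. in_lang n m a}" "in_lang n m a" "\<not> consistent n m (insert a X)"
  obtains xs where "set xs \<subseteq> X" "GLP n m (imps xs (Neg a))"
proof -
  obtain xs where xs: "set xs \<subseteq> insert a X" "GLP n m (imps xs Bot)"
    using assms by (auto simp: consistent_def)
  let ?ys = "filter (\<lambda>x. x \<noteq> a) xs"
  have "GLP n m (imps ?ys (Neg a))"
    by (rule GLP_prop_rule1[OF xs(2)])
      (use GLP_in_lang[OF xs(2)] assms(2) in \<open>auto simp: in_lang_imps peval_imps\<close>)
  moreover have "set ?ys \<subseteq> X" using xs(1) by auto
  ultimately show thesis by (rule that[rotated])
qed

lemma lindenbaum:
  assumes X: "consistent n m X"
  obtains Y where "max_consistent n m Y" "X \<subseteq> Y"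
proof -
  let ?A = "{Y. X \<subseteq> Y \<and> consistent n m Y}"
  have "\<exists>M\<in>?A. \<forall>Y\<in>?A. M \<subseteq> Y \<longrightarrow> Y = M"
  proof (rule subset_Zorn_nonempty)
    fix C assume C: "C \<noteq> {}" "subset.chain ?A C"
    have "\<not> GLP n m (imps xs Bot)" if xs: "set xs \<subseteq> \<Union>C" for xs
    proof -
      obtain B where "B \<in> C" "set xs \<subseteq> B"
        using finite_subset_Union_chain[OF finite_set xs C] by blast
      then show ?thesis using C(2) by (auto simp: subset.chain_def consistent_def)
    qed
    moreover have "X \<subseteq> \<Union>C" using C unfolding subset.chain_def by blast
    moreover have "\<Union>C \<subseteq> {a. in_lang n m a}"
      using C(2) unfolding subset.chain_def consistent_def by blast
    ultimately show "\<Union>C \<in> ?A" by (simp add: consistent_def)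
  qed (use X in blast)
  then obtain M where "M \<in> ?A" and max: "\<forall>Y\<in>?A. M \<subseteq> Y \<longrightarrow> Y = M" ..
  then have M: "X \<subseteq> M" "consistent n m M" by simp_all
  have lM: "M \<subseteq> {a. in_lang n m a}" using M(2) by (simp add: consistent_def)
  have inconsistent_extension: "\<not> consistent n m (insert b M)" if "b \<notin> M" for b
  proof
    assume "consistent n m (insert b M)"
    moreover have "X \<subseteq> insert b M" "M \<subseteq> insert b M" using M(1) by auto
    ultimately have "insert b M = M" using max by blast
    with that show False by blast
  qed
  have "a \<in> M \<or> Neg a \<in> M" if a: "in_lang n m a" for a
  proof (rule ccontr)
    assume "\<not> (a \<in> M \<or> Neg a \<in> M)"
    then have "\<not> consistent n m (insert a M)" "\<not> consistent n m (insert (Neg a) M)"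
      using inconsistent_extension by auto
    then obtain xs ys where xs: "set xs \<subseteq> M" "GLP n m (imps xs (Neg a))"
      and ys: "set ys \<subseteq> M" "GLP n m (imps ys (Neg (Neg a)))"
      using inconsistent_insert[OF lM a] inconsistent_insert[OF lM, of "Neg a"] a
      by (metis in_lang_connectives(1))
    have "GLP n m (imps (xs @ ys) Bot)"
      by (rule GLP_prop_rule2[OF xs(2) ys(2)])
        (use GLP_in_lang[OF xs(2)] GLP_in_lang[OF ys(2)] in \<open>auto simp: in_lang_imps peval_imps\<close>)
    moreover have "set (xs @ ys) \<subseteq> M" using xs(1) ys(1) by simp
    ultimately show False using M(2) unfolding consistent_def by blast
  qed
  then show thesis using that M by (auto simp: max_consistent_def)
qed

lemma max_consistent_Dia_finite:
  assumes G: "max_consistent n m G" and n: "0 < n"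
  shows "set xs \<subseteq> {Dia 0 \<gamma> | \<gamma>. \<gamma> \<in> G} \<Longrightarrow> \<exists>g\<in>G. \<forall>x\<in>set xs. GLP n m (Imp (Dia 0 g) x)"
proof (induction xs)
  case Nil
  have "Top \<in> G" using max_consistent_GLP[OF G] by (simp add: GLP_tautology)
  then show ?case by auto
next
  case (Cons x xs)
  then obtain g where g: "g \<in> G" "\<forall>x\<in>set xs. GLP n m (Imp (Dia 0 g) x)" by auto
  obtain g1 where g1: "x = Dia 0 g1" "g1 \<in> G" using Cons.prems by auto
  have l: "in_lang n m g" "in_lang n m g1" using max_consistent_in_lang G g g1 by blast+
  have "Conj g1 g \<in> G"
    by (rule max_consistent_mp2[OF G g1(2) g(1)], rule GLP_tautology) (use l in auto)
  moreover have "GLP n m (Imp (Dia 0 (Conj g1 g)) x)"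
    unfolding g1 by (rule GLP_dia_mono, rule GLP_tautology) (use l n in auto)
  moreover have "GLP n m (Imp (Dia 0 (Conj g1 g)) y)" if "y \<in> set xs" for y
  proof -
    have g_y: "GLP n m (Imp (Dia 0 g) y)" using g(2) that by blast
    have "GLP n m (Imp (Dia 0 (Conj g1 g)) (Dia 0 g))"
      by (rule GLP_dia_mono, rule GLP_tautology) (use l n in auto)
    then show ?thesis by (rule GLP_prop_rule2[OF _ g_y]) (use GLP_in_lang[OF g_y] l n in auto)
  qed
  ultimately show ?case by auto
qed

subsection \<open>Evaluation against a pair of theories\<close>

definition box_closed_theory :: "nat \<Rightarrow> nat \<Rightarrow> nat \<Rightarrow> fm set \<Rightarrow> bool" where
  "box_closed_theory n m k T \<longleftrightarrow> (\<forall>a. GLP n m a \<longrightarrow> a \<in> T) \<and>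
     (\<forall>a b. a \<in> T \<longrightarrow> Imp a b \<in> T \<longrightarrow> b \<in> T) \<and> (\<forall>a\<in>T. Box k a \<in> T)"

lemma box_closed_theoryD:
  assumes "box_closed_theory n m k T"
  shows "GLP n m a \<Longrightarrow> a \<in> T" and "a \<in> T \<Longrightarrow> Imp a b \<in> T \<Longrightarrow> b \<in> T"
    and "a \<in> T \<Longrightarrow> Box k a \<in> T"
  using assms unfolding box_closed_theory_def by blast+

lemma box_closed_theory_Loeb:
  assumes T: "box_closed_theory n m k T" and k: "k < n" and a: "in_lang n m a"
    and a_T: "Imp (Box k a) a \<in> T"
  shows "a \<in> T"
proof -
  have "Box k (Imp (Box k a) a) \<in> T" using T a_T by (rule box_closed_theoryD(3))
  moreover have "Imp (Box k (Imp (Box k a) a)) (Box k a) \<in> T"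
    using T GLP.axL[OF k a] by (rule box_closed_theoryD(1))
  ultimately have "Box k a \<in> T" by (rule box_closed_theoryD(2)[OF T])
  then show ?thesis using a_T by (rule box_closed_theoryD(2)[OF T])
qed

text \<open>A single world whose [0]- and [1]-successors are described only through the
  theories T0 and T1 of formulas true there; [k] for k > 1 is vacuous.\<close>
fun theory_holds :: "fm set \<Rightarrow> fm set \<Rightarrow> (nat \<Rightarrow> bool) \<Rightarrow> fm \<Rightarrow> bool" where
  "theory_holds T0 T1 V (Var i) = V i"
| "theory_holds T0 T1 V Bot = False"
| "theory_holds T0 T1 V (Imp a b) = (theory_holds T0 T1 V a \<longrightarrow> theory_holds T0 T1 V b)"
| "theory_holds T0 T1 V (Box k a) =
     (if k = 0 then a \<in> T0 else if k = 1 then a \<in> T1 else True)"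

lemma theory_holds_Dia [simp]:
  "theory_holds T0 T1 V (Dia k a) = (\<not> theory_holds T0 T1 V (Box k (Neg a)))"
  by (simp add: Dia_def Neg_def)

lemma peval_theory_holds: "peval (theory_holds T0 T1 V) a = theory_holds T0 T1 V a"
  by (induction a) auto

lemma theory_holds_sound:
  assumes n: "1 < n"
    and T0: "box_closed_theory n m 0 T0" and T1: "box_closed_theory n m 1 T1"
    and T0_T1: "T0 \<subseteq> T1"
    and dia: "\<And>a. in_lang n m a \<Longrightarrow> Neg a \<notin> T0 \<Longrightarrow> Dia 0 a \<in> T1"
  shows "GLP n m a \<Longrightarrow> theory_holds T0 T1 V a"
proof (induction rule: GLP.induct)
  case (tautI a)
  then show ?case by (simp add: taut_def flip: peval_theory_holds)
next
  case (axK k a b)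
  then show ?case
    using box_closed_theoryD(2)[OF T0, of a b] box_closed_theoryD(2)[OF T1, of a b] by simp
next
  case (axL k a)
  then show ?case
    using box_closed_theory_Loeb[OF T0 _ \<open>in_lang n m a\<close>]
      box_closed_theory_Loeb[OF T1 n \<open>in_lang n m a\<close>] by auto
next
  case (axDia j k a)
  then show ?case using dia[of a] by (cases "k = 1") auto
next
  case (axMono j k a)
  then show ?case using T0_T1 by auto
next
  case (nec k a)
  then show ?case using box_closed_theoryD(1)[OF T0] box_closed_theoryD(1)[OF T1] by simp
qed simp

subsection \<open>Formulas that start only bounded chains\<close>

context
  fixes n m :: nat and \<phi> :: fm
  assumes n: "1 < n" and \<phi>: "in_lang n m \<phi>"
begin

definition chain_refutable :: "fm \<Rightarrow> bool" where
  "chain_refutable d \<longleftrightarrow> (\<exists>j. GLP n m (Neg (dia_chain \<phi> j d)))"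

lemma GLP_Neg_dia_chain_Suc:
  assumes "GLP n m (Neg (dia_chain \<phi> j x))"
  shows "GLP n m (Neg (dia_chain \<phi> (Suc j) x))"
proof -
  have "GLP n m (Box 0 (Neg (dia_chain \<phi> j x)))" using GLP.nec[OF _ assms] n by simp
  then show ?thesis by (rule GLP_prop_rule1) (use GLP_in_lang[OF assms] \<phi> n in auto)
qed

lemma GLP_Neg_dia_chain_mono:
  assumes "j \<le> j'" and "GLP n m (Neg (dia_chain \<phi> j x))"
  shows "GLP n m (Neg (dia_chain \<phi> j' x))"
  using assms by (induction j' rule: dec_induct) (blast intro: GLP_Neg_dia_chain_Suc)+

lemma GLP_dia_chain_mono:
  "GLP n m (Imp x y) \<Longrightarrow> GLP n m (Imp (dia_chain \<phi> j x) (dia_chain \<phi> j y))"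
proof (induction j)
  case (Suc j)
  have dia: "GLP n m (Imp (Dia 0 (dia_chain \<phi> j x)) (Dia 0 (dia_chain \<phi> j y)))"
    using GLP_dia_mono[OF Suc.IH[OF Suc.prems]] n by simp
  then show ?case
    by (simp, rule GLP_prop_rule1) (use GLP_in_lang[OF dia] \<phi> in auto)
qed simp

lemma GLP_dia_chain_Disj:
  assumes x: "in_lang n m x" and y: "in_lang n m y"
  shows "GLP n m (Imp (dia_chain \<phi> j (Disj x y)) (Disj (dia_chain \<phi> j x) (dia_chain \<phi> j y)))"
proof (induction j)
  case 0
  show ?case by (simp, rule GLP_tautology) (use x y in auto)
next
  case (Suc j)
  have l: "in_lang n m (dia_chain \<phi> j x)" "in_lang n m (dia_chain \<phi> j y)"
    "in_lang n m (dia_chain \<phi> j (Disj x y))"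
    using x y n \<phi> by (auto intro: in_lang_dia_chain)
  have "GLP n m (Imp (Dia 0 (dia_chain \<phi> j (Disj x y)))
      (Dia 0 (Disj (dia_chain \<phi> j x) (dia_chain \<phi> j y))))"
    using GLP_dia_mono[OF Suc.IH] n by simp
  moreover have "GLP n m (Imp (Dia 0 (Disj (dia_chain \<phi> j x) (dia_chain \<phi> j y)))
      (Disj (Dia 0 (dia_chain \<phi> j x)) (Dia 0 (dia_chain \<phi> j y))))"
    using GLP_dia_disj l n by simp
  ultimately show ?case by (simp, rule GLP_prop_rule2) (use \<phi> l n in auto)
qed

lemma chain_refutable_Disj:
  assumes "chain_refutable x" "chain_refutable y" "in_lang n m x" "in_lang n m y"
  shows "chain_refutable (Disj x y)"
proof -
  obtain j1 j2 where "GLP n m (Neg (dia_chain \<phi> j1 x))" "GLP n m (Neg (dia_chain \<phi> j2 y))"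
    using assms(1,2) by (auto simp: chain_refutable_def)
  then have "GLP n m (Neg (dia_chain \<phi> (max j1 j2) x))" "GLP n m (Neg (dia_chain \<phi> (max j1 j2) y))"
    by (auto intro: GLP_Neg_dia_chain_mono[rotated])
  moreover have "GLP n m (Imp (dia_chain \<phi> (max j1 j2) (Disj x y))
      (Disj (dia_chain \<phi> (max j1 j2) x) (dia_chain \<phi> (max j1 j2) y)))"
    using GLP_dia_chain_Disj assms(3,4) by blast
  moreover have "in_lang n m (Neg (dia_chain \<phi> (max j1 j2) (Disj x y)))"
    using assms(3,4) n \<phi> by (simp add: in_lang_dia_chain)
  ultimately have "GLP n m (Neg (dia_chain \<phi> (max j1 j2) (Disj x y)))"
    by (rule GLP_prop_rule3) auto
  then show ?thesis by (auto simp: chain_refutable_def)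
qed

lemma chain_refutable_antimono: "GLP n m (Imp x y) \<Longrightarrow> chain_refutable y \<Longrightarrow> chain_refutable x"
proof -
  assume xy: "GLP n m (Imp x y)" and "chain_refutable y"
  then obtain j where j: "GLP n m (Neg (dia_chain \<phi> j y))" by (auto simp: chain_refutable_def)
  have xy_chain: "GLP n m (Imp (dia_chain \<phi> j x) (dia_chain \<phi> j y))"
    using xy by (rule GLP_dia_chain_mono)
  then have "GLP n m (Neg (dia_chain \<phi> j x))"
    by (rule GLP_prop_rule2[OF j]) (use GLP_in_lang[OF xy_chain] in auto)
  then show ?thesis by (auto simp: chain_refutable_def)
qed

lemma chain_refutable_shift: "chain_refutable (Conj (Neg \<phi>) (Dia 0 g)) \<Longrightarrow> chain_refutable g"
  by (auto simp: chain_refutable_def dia_chain_Suc_right[symmetric] simp del: dia_chain_Suc)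

lemma chain_refutable_Bot: "chain_refutable Bot"
proof -
  have "GLP n m (Neg (dia_chain \<phi> 0 Bot))" by (simp, rule GLP_tautology) auto
  then show ?thesis unfolding chain_refutable_def ..
qed

definition refuted_negs :: "fm set" where
  "refuted_negs = {Neg d | d. in_lang n m d \<and> chain_refutable d}"

lemma refuted_negs_finite:
  "set xs \<subseteq> refuted_negs \<Longrightarrow>
     \<exists>d. in_lang n m d \<and> chain_refutable d \<and> (\<forall>x\<in>set xs. GLP n m (Imp (Neg d) x))"
proof (induction xs)
  case Nil
  then show ?case using chain_refutable_Bot by (intro exI[of _ Bot]) auto
next
  case (Cons x xs)
  then obtain d where d: "in_lang n m d" "chain_refutable d" "\<forall>x\<in>set xs. GLP n m (Imp (Neg d) x)"
    by auto
  obtain d1 where d1: "x = Neg d1" "in_lang n m d1" "chain_refutable d1"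
    using Cons.prems by (auto simp: refuted_negs_def)
  have "GLP n m (Imp (Neg (Disj d1 d)) y)" if "y \<in> set (x # xs)" for y
  proof (cases "y = x")
    case True
    show ?thesis by (rule GLP_tautology) (use True d d1 in auto)
  next
    case False
    then have c: "GLP n m (Imp (Neg d) y)" using d(3) that by auto
    show ?thesis by (rule GLP_prop_rule1[OF c]) (use GLP_in_lang[OF c] d1 in auto)
  qed
  moreover have "chain_refutable (Disj d1 d)" using chain_refutable_Disj d1 d by blast
  ultimately show ?case using d d1 by (intro exI[of _ "Disj d1 d"]) auto
qed

lemma consistent_Un_refuted_negs:
  assumes P: "P \<subseteq> {a. in_lang n m a}"
    and P_unbounded: "\<And>ps. set ps \<subseteq> P \<Longrightarrow>
      \<exists>\<delta>. in_lang n m \<delta> \<and> \<not> chain_refutable \<delta> \<and> (\<forall>x\<in>set ps. GLP n m (Imp \<delta> x))"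
  shows "consistent n m (P \<union> refuted_negs)"
  unfolding consistent_def
proof (intro conjI allI impI notI)
  show "P \<union> refuted_negs \<subseteq> {a. in_lang n m a}" using P by (auto simp: refuted_negs_def)
next
  fix xs assume xs: "set xs \<subseteq> P \<union> refuted_negs" and incons: "GLP n m (imps xs Bot)"
  obtain \<delta> where \<delta>: "in_lang n m \<delta>" "\<not> chain_refutable \<delta>"
    "\<forall>x\<in>set (filter (\<lambda>x. x \<in> P) xs). GLP n m (Imp \<delta> x)"
    using P_unbounded[of "filter (\<lambda>x. x \<in> P) xs"] by auto
  obtain d where d: "in_lang n m d" "chain_refutable d"
    "\<forall>x\<in>set (filter (\<lambda>x. x \<notin> P) xs). GLP n m (Imp (Neg d) x)"
    using refuted_negs_finite[of "filter (\<lambda>x. x \<notin> P) xs"] xs by auto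
  have "\<forall>x\<in>set xs. GLP n m (Imp (Conj \<delta> (Neg d)) x)"
  proof
    fix x assume x: "x \<in> set xs"
    show "GLP n m (Imp (Conj \<delta> (Neg d)) x)"
    proof (cases "x \<in> P")
      case True
      then have c: "GLP n m (Imp \<delta> x)" using \<delta>(3) x by simp
      show ?thesis by (rule GLP_prop_rule1[OF c]) (use GLP_in_lang[OF c] d in auto)
    next
      case False
      then have c: "GLP n m (Imp (Neg d) x)" using d(3) x by simp
      show ?thesis by (rule GLP_prop_rule1[OF c]) (use GLP_in_lang[OF c] \<delta> in auto)
    qed
  qed
  then have "GLP n m (Neg (Conj \<delta> (Neg d)))"
    by (rule GLP_Neg_of_imps_Bot[OF incons]) (use \<delta>(1) d(1) in simp)
  then have "GLP n m (Imp \<delta> d)" by (rule GLP_prop_rule1) (use \<delta>(1) d(1) in auto)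
  then show False using chain_refutable_antimono d(2) \<delta>(2) by blast
qed

lemma max_consistent_not_chain_refutable:
  assumes G: "max_consistent n m G" "refuted_negs \<subseteq> G" and g: "g \<in> G"
  shows "\<not> chain_refutable g"
proof
  have l: "in_lang n m g" using max_consistent_in_lang[OF G(1) g] .
  assume "chain_refutable g"
  then have "Neg g \<in> G" using G(2) l by (auto simp: refuted_negs_def)
  then show False using max_consistent_Neg_iff[OF G(1) l] g by blast
qed

definition successor_base :: "fm set \<Rightarrow> fm set" where
  "successor_base G = insert (Neg \<phi>) {Dia 0 \<gamma> | \<gamma>. \<gamma> \<in> G} \<union> refuted_negs"

text \<open>Each finite part of the successor base follows from \<not>\<phi> \<and> \<langle>0\<rangle>g for a single g \<in> G,
  which is not chain refutable because g is not.\<close>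
lemma consistent_successor_base:
  assumes G: "max_consistent n m G" "refuted_negs \<subseteq> G"
  shows "consistent n m (successor_base G)"
  unfolding successor_base_def
proof (rule consistent_Un_refuted_negs)
  show "insert (Neg \<phi>) {Dia 0 \<gamma> | \<gamma>. \<gamma> \<in> G} \<subseteq> {a. in_lang n m a}"
    using \<phi> max_consistent_in_lang[OF G(1)] n by auto
  fix ps assume ps: "set ps \<subseteq> insert (Neg \<phi>) {Dia 0 \<gamma> | \<gamma>. \<gamma> \<in> G}"
  then have "set (filter (\<lambda>x. x \<noteq> Neg \<phi>) ps) \<subseteq> {Dia 0 \<gamma> | \<gamma>. \<gamma> \<in> G}" by auto
  then obtain g where g: "g \<in> G" "\<forall>x\<in>set (filter (\<lambda>x. x \<noteq> Neg \<phi>) ps). GLP n m (Imp (Dia 0 g) x)"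
    using max_consistent_Dia_finite[OF G(1)] n by (meson less_trans zero_less_one)
  have l: "in_lang n m g" using max_consistent_in_lang[OF G(1) g(1)] .
  have "\<not> chain_refutable (Conj (Neg \<phi>) (Dia 0 g))"
    using chain_refutable_shift max_consistent_not_chain_refutable[OF G g(1)] by blast
  moreover have "GLP n m (Imp (Conj (Neg \<phi>) (Dia 0 g)) x)" if x: "x \<in> set ps" for x
  proof (cases "x = Neg \<phi>")
    case True
    show ?thesis by (rule GLP_tautology) (use True l \<phi> n in auto)
  next
    case False
    then have c: "GLP n m (Imp (Dia 0 g) x)" using g(2) x by auto
    show ?thesis by (rule GLP_prop_rule1[OF c]) (use GLP_in_lang[OF c] \<phi> in auto)
  qed
  ultimately show "\<exists>\<delta>. in_lang n m \<delta> \<and> \<not> chain_refutable \<delta> \<and> (\<forall>x\<in>set ps. GLP n m (Imp \<delta> x))"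
    using l \<phi> n by (intro exI[of _ "Conj (Neg \<phi>) (Dia 0 g)"]) auto
qed

text \<open>If all dia_chain \<phi> J \<top> are consistent, build maximal consistent sets world 0, world 1, \<dots>
  with \<not>\<phi> and \<langle>0\<rangle>\<gamma> in world (i + 1) for every \<gamma> in world i; keeping refuted_negs in every
  world is what keeps the construction going. The [0]-theory shared by all worlds and the
  [1]-theory of almost all worlds then evaluate [1]\<phi> to false.\<close>

context
  assumes unbounded: "\<not> chain_refutable Top"
begin

primrec world :: "nat \<Rightarrow> fm set" where
  "world 0 = (SOME Y. max_consistent n m Y \<and> refuted_negs \<subseteq> Y)"
| "world (Suc i) = (SOME Y. max_consistent n m Y \<and> successor_base (world i) \<subseteq> Y)"

declare world.simps [simp del]

lemma world_invariant: "max_consistent n m (world i) \<and> refuted_negs \<subseteq> world i"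
proof (induction i)
  case 0
  have "consistent n m ({} \<union> refuted_negs)"
    by (rule consistent_Un_refuted_negs) (use unbounded in \<open>auto intro!: exI[of _ Top]\<close>)
  then obtain Y where "max_consistent n m Y" "{} \<union> refuted_negs \<subseteq> Y" by (rule lindenbaum)
  then have "\<exists>Y. max_consistent n m Y \<and> refuted_negs \<subseteq> Y" by auto
  then show ?case unfolding world.simps by (rule someI_ex)
next
  case (Suc i)
  then obtain Y where "max_consistent n m Y" "successor_base (world i) \<subseteq> Y"
    using consistent_successor_base lindenbaum by blast
  then have "\<exists>Y. max_consistent n m Y \<and> successor_base (world i) \<subseteq> Y" by blast
  then have "max_consistent n m (world (Suc i)) \<and> successor_base (world i) \<subseteq> world (Suc i)"
    unfolding world.simps by (rule someI_ex)
  then show ?case by (auto simp: successor_base_def)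
qed

lemma max_consistent_world: "max_consistent n m (world i)"
  using world_invariant by blast

lemma successor_base_world: "successor_base (world i) \<subseteq> world (Suc i)"
proof -
  obtain Y where "max_consistent n m Y" "successor_base (world i) \<subseteq> Y"
    using consistent_successor_base world_invariant lindenbaum by blast
  then have "\<exists>Y. max_consistent n m Y \<and> successor_base (world i) \<subseteq> Y" by blast
  then show ?thesis unfolding world.simps by (rule someI_ex[THEN conjunct2])
qed

lemma Neg_in_world_Suc: "Neg \<phi> \<in> world (Suc i)"
  using successor_base_world by (auto simp: successor_base_def)

lemma Dia_in_world_Suc: "\<gamma> \<in> world i \<Longrightarrow> Dia 0 \<gamma> \<in> world (Suc i)"
  using successor_base_world by (auto simp: successor_base_def)

lemma in_lang_world: "a \<in> world i \<Longrightarrow> in_lang n m a"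
  using max_consistent_in_lang max_consistent_world by blast

lemmas world_GLP = max_consistent_GLP[OF max_consistent_world]
lemmas world_mp = max_consistent_mp[OF max_consistent_world]
lemmas world_mp2 = max_consistent_mp2[OF max_consistent_world]

definition box0_theory :: "fm set" where
  "box0_theory = {\<chi>. \<forall>i. Box 0 \<chi> \<in> world i}"

definition box1_theory :: "fm set" where
  "box1_theory = {\<chi>. \<exists>N. \<forall>i\<ge>N. \<chi> \<in> world i \<and> Box 1 \<chi> \<in> world i}"

lemma box_closed_theory_box0_theory: "box_closed_theory n m 0 box0_theory"
  unfolding box_closed_theory_def
proof (intro conjI allI impI ballI)
  fix a assume "GLP n m a"
  then have "GLP n m (Box 0 a)" using GLP.nec[of 0 n m a] n by simp
  then show "a \<in> box0_theory" by (simp add: box0_theory_def world_GLP)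
next
  fix a b assume a: "a \<in> box0_theory" and ab: "Imp a b \<in> box0_theory"
  have "Box 0 b \<in> world i" for i
  proof -
    have in_world: "Box 0 (Imp a b) \<in> world i" "Box 0 a \<in> world i"
      using a ab by (auto simp: box0_theory_def)
    have "in_lang n m a" "in_lang n m b" using in_lang_world[OF in_world(1)] by auto
    then have "GLP n m (Imp (Box 0 (Imp a b)) (Imp (Box 0 a) (Box 0 b)))" using GLP.axK n by simp
    then show ?thesis using world_mp2[OF in_world] by blast
  qed
  then show "b \<in> box0_theory" by (simp add: box0_theory_def)
next
  fix a assume a: "a \<in> box0_theory"
  have "Box 0 (Box 0 a) \<in> world i" for i
  proof -
    have in_world: "Box 0 a \<in> world i" using a by (simp add: box0_theory_def)
    have "GLP n m (Imp (Box 0 a) (Box 0 (Box 0 a)))"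
      using GLP_box_box in_lang_world[OF in_world] n by simp
    then show ?thesis using world_mp[OF in_world] by blast
  qed
  then show "Box 0 a \<in> box0_theory" by (simp add: box0_theory_def)
qed

lemma box_closed_theory_box1_theory: "box_closed_theory n m 1 box1_theory"
  unfolding box_closed_theory_def
proof (intro conjI allI impI ballI)
  fix a assume "GLP n m a"
  moreover have "GLP n m (Box 1 a)" using GLP.nec[OF n \<open>GLP n m a\<close>] .
  ultimately show "a \<in> box1_theory" unfolding box1_theory_def by (blast intro: world_GLP)
next
  fix a b assume a: "a \<in> box1_theory" and ab: "Imp a b \<in> box1_theory"
  obtain N1 where N1: "\<forall>i\<ge>N1. a \<in> world i \<and> Box 1 a \<in> world i"
    using a unfolding box1_theory_def by blast
  obtain N2 where N2: "\<forall>i\<ge>N2. Imp a b \<in> world i \<and> Box 1 (Imp a b) \<in> world i"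
    using ab unfolding box1_theory_def by blast
  have "b \<in> world i \<and> Box 1 b \<in> world i" if i: "i \<ge> max N1 N2" for i
  proof -
    have in_world: "a \<in> world i" "Box 1 a \<in> world i" "Imp a b \<in> world i" "Box 1 (Imp a b) \<in> world i"
      using N1 N2 i by auto
    have l: "in_lang n m a" "in_lang n m b" using in_lang_world[OF in_world(3)] by auto
    have "GLP n m (Imp a (Imp (Imp a b) b))" by (rule GLP_tautology) (use l in auto)
    moreover have "GLP n m (Imp (Box 1 (Imp a b)) (Imp (Box 1 a) (Box 1 b)))"
      using GLP.axK l n by simp
    ultimately show ?thesis
      using world_mp2[OF in_world(1,3)] world_mp2[OF in_world(4,2)] by blast
  qed
  then show "b \<in> box1_theory" unfolding box1_theory_def by blast
next
  fix a assume a: "a \<in> box1_theory"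
  then obtain N where N: "\<forall>i\<ge>N. a \<in> world i \<and> Box 1 a \<in> world i"
    unfolding box1_theory_def by blast
  have "Box 1 (Box 1 a) \<in> world i" if "i \<ge> N" for i
  proof -
    have in_world: "Box 1 a \<in> world i" using N that by blast
    have "GLP n m (Imp (Box 1 a) (Box 1 (Box 1 a)))"
      using GLP_box_box in_lang_world[OF in_world] n by simp
    then show ?thesis using world_mp[OF in_world] by blast
  qed
  then show "Box 1 a \<in> box1_theory" unfolding box1_theory_def using N by blast
qed

text \<open>If [0]c holds in all worlds then so does c: otherwise \<langle>0\<rangle>\<not>c would hold in the next world.\<close>
lemma box0_theory_subset_box1_theory: "box0_theory \<subseteq> box1_theory"
proof
  fix c assume c: "c \<in> box0_theory"
  have "c \<in> world i \<and> Box 1 c \<in> world i" for i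
  proof -
    have in_world: "Box 0 c \<in> world i" "Box 0 c \<in> world (Suc i)"
      using c unfolding box0_theory_def by blast+
    have l: "in_lang n m c" using in_lang_world[OF in_world(1)] by simp
    have "GLP n m (Imp (Box 0 c) (Box 1 c))" using GLP.axMono[of 0 1 n m c] n l by simp
    then have "Box 1 c \<in> world i" using world_mp[OF in_world(1)] by blast
    moreover have "c \<in> world i"
    proof (rule ccontr)
      assume "c \<notin> world i"
      then have "Neg c \<in> world i" using max_consistent_Neg_iff[OF max_consistent_world l] by blast
      then have "Neg (Box 0 (Neg (Neg c))) \<in> world (Suc i)"
        using Dia_in_world_Suc by (simp add: Dia_def)
      moreover have "GLP n m (Imp (Box 0 c) (Box 0 (Neg (Neg c))))"
        by (rule GLP_box_mono, rule GLP_tautology) (use l n in auto)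
      then have "Box 0 (Neg (Neg c)) \<in> world (Suc i)" using world_mp[OF in_world(2)] by blast
      moreover have "in_lang n m (Box 0 (Neg (Neg c)))" using l n by simp
      ultimately show False using max_consistent_Neg_iff[OF max_consistent_world] by blast
    qed
    ultimately show ?thesis by blast
  qed
  then show "c \<in> box1_theory" unfolding box1_theory_def by blast
qed

text \<open>\<langle>0\<rangle>a, once true, persists along the chain by transitivity of \<langle>0\<rangle>,
  and is [1]-persistent by the axiom \<langle>0\<rangle>a \<rightarrow> [1]\<langle>0\<rangle>a.\<close>
lemma Dia_in_box1_theory:
  assumes l: "in_lang n m a" and not_box0: "Neg a \<notin> box0_theory"
  shows "Dia 0 a \<in> box1_theory"
proof -
  obtain i where "Box 0 (Neg a) \<notin> world i" using not_box0 by (auto simp: box0_theory_def)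
  then have dia_i: "Dia 0 a \<in> world i"
    using max_consistent_Neg_iff[OF max_consistent_world, of "Box 0 (Neg a)"] l n
    by (simp add: Dia_def)
  have persist: "Dia 0 a \<in> world j" if "i \<le> j" for j
    using that
  proof (induction j rule: dec_induct)
    case base
    show ?case by (rule dia_i)
  next
    case (step k)
    have "Dia 0 (Dia 0 a) \<in> world (Suc k)" using \<open>Dia 0 a \<in> world k\<close> by (rule Dia_in_world_Suc)
    moreover have "GLP n m (Imp (Dia 0 (Dia 0 a)) (Dia 0 a))" using GLP_dia_dia l n by simp
    ultimately show ?case by (rule world_mp)
  qed
  have "GLP n m (Imp (Dia 0 a) (Box 1 (Dia 0 a)))" using GLP.axDia[of 0 1 n m a] l n by simp
  then have "\<forall>j\<ge>i. Dia 0 a \<in> world j \<and> Box 1 (Dia 0 a) \<in> world j"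
    using persist world_mp by blast
  then show ?thesis unfolding box1_theory_def by blast
qed

lemma not_GLP_box1: "\<not> GLP n m (Box 1 \<phi>)"
proof
  assume "GLP n m (Box 1 \<phi>)"
  then have "theory_holds box0_theory box1_theory (\<lambda>_. False) (Box 1 \<phi>)"
    using theory_holds_sound[OF n box_closed_theory_box0_theory box_closed_theory_box1_theory
          box0_theory_subset_box1_theory] Dia_in_box1_theory by blast
  then obtain N where "\<forall>i\<ge>N. \<phi> \<in> world i" by (auto simp: box1_theory_def)
  then have "\<phi> \<in> world (Suc N)" by simp
  then show False
    using Neg_in_world_Suc max_consistent_Neg_iff[OF max_consistent_world \<phi>] by blast
qed

end

lemma GLP_box1_imp_bounded_chain: "GLP n m (Box 1 \<phi>) \<Longrightarrow> \<exists>J. GLP n m (Neg (dia_chain \<phi> J Top))"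
  using not_GLP_box1 unfolding chain_refutable_def by blast

end

lemma less_gen_chain_unifier:
  assumes s: "is_subst n m s" and refuted: "GLP n m (Neg (dia_chain (s p) J Top))"
  shows "less_gen n m s (chain_unifier p J)"
  unfolding less_gen_def
proof (intro exI[of _ s] conjI allI impI)
  show "is_subst n m s" by (rule s)
  fix i assume "i < m"
  then have l: "in_lang n m (s i)" using s by (simp add: is_subst_def)
  show "GLP n m (Iff (s i) (subst s (chain_unifier p J i)))"
  proof (cases "i = p")
    case True
    have "GLP n m (Iff (s p) (Disj (s p) (dia_chain (s p) J Top)))"
      by (rule GLP_prop_rule1[OF refuted]) (use GLP_in_lang[OF refuted] True l in auto)
    then show ?thesis using True by (simp add: chain_unifier_def subst_dia_chain)
  next
    case False
    have "GLP n m (Iff (s i) (s i))" by (rule GLP_tautology) (use l in auto)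
    then show ?thesis using False by (simp add: chain_unifier_def)
  qed
qed

text \<open>Evaluate in the frame of the natural numbers with all variables false: there
  chain_unifier p (Suc J) p fails at 0, \<dots>, J, so any formula equivalent to it makes
  dia_chain _ J \<top> true at J.\<close>
lemma not_less_gen_chain_unifier:
  assumes p: "p < m" and refuted: "GLP n m (Neg (dia_chain (s p) J Top))"
  shows "\<not> less_gen n m (chain_unifier p (Suc J)) s"
proof
  assume "less_gen n m (chain_unifier p (Suc J)) s"
  then obtain \<theta> where \<theta>: "GLP n m (Iff (chain_unifier p (Suc J) p) (subst \<theta> (s p)))"
    using p by (auto simp: less_gen_def)
  define V :: "nat \<Rightarrow> nat \<Rightarrow> bool" where "V = (\<lambda>_ _. False)"
  have "\<not> nat_holds V x (chain_unifier p (Suc J) p)" if "x \<le> J" for x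
    using that nat_holds_dia_chain[of x V "Var p" "Suc J"] by (simp add: chain_unifier_def V_def)
  then have "\<forall>y\<le>J. \<not> nat_holds V y (subst \<theta> (s p))"
    using nat_holds_sound[OF \<theta>] by simp
  then have "nat_holds V J (dia_chain (subst \<theta> (s p)) J Top)"
    using nat_holds_dia_chain by blast
  moreover have "nat_holds V J (subst \<theta> (Neg (dia_chain (s p) J Top)))"
    using nat_holds_sound[OF refuted] by (simp only: nat_holds_subst)
  ultimately show False by (simp add: subst_dia_chain)
qed

lemma not_maximal_unifier_box1:
  assumes n: "1 < n" and p: "p < m"
  shows "\<not> maximal_unifier n m s (Box 1 (Var p))"
proof
  assume max: "maximal_unifier n m s (Box 1 (Var p))"
  then have s: "is_subst n m s" and "GLP n m (Box 1 (s p))"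
    by (auto simp: maximal_unifier_def unifier_def)
  moreover have l: "in_lang n m (s p)" using s p by (simp add: is_subst_def)
  ultimately obtain J where J: "GLP n m (Neg (dia_chain (s p) J Top))"
    using GLP_box1_imp_bounded_chain n by blast
  have "less_gen n m s (chain_unifier p (Suc J))"
    using less_gen_chain_unifier[OF s GLP_Neg_dia_chain_Suc[OF n l J]] .
  then have "strictly_less_gen n m s (chain_unifier p (Suc J))"
    using not_less_gen_chain_unifier[where s = s, OF p J] by (simp add: strictly_less_gen_def)
  then show False using max unifier_chain_unifier[OF n p] by (auto simp: maximal_unifier_def)
qed

lemma nullary_if_no_maximal_unifier:
  assumes "in_lang n m a" and "unifiable n m a" and "\<nexists>s. maximal_unifier n m s a"
  shows "nullary n m"
proof -
  have "\<not> complete_max_set n m S a" for S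
    using assms(2,3) unfolding complete_max_set_def unifiable_def by blast
  then show ?thesis using assms(1,2) unfolding nullary_def finitary_def infinitary_def by blast
qed

theorem mainTheorem1:
  fixes n m p :: nat
  assumes "n > 1" and "m \<ge> 1" and "p < m"
  shows "unifiable n m (Box 1 (Var p))
       \<and> \<not> (\<exists>s. maximal_unifier n m s (Box 1 (Var p)))
       \<and> nullary n m"
proof -
  have "unifiable n m (Box 1 (Var p))"
    using unifier_chain_unifier[OF assms(1,3)] by (auto simp: unifiable_def)
  moreover have "\<nexists>s. maximal_unifier n m s (Box 1 (Var p))"
    using not_maximal_unifier_box1[OF assms(1,3)] by blast
  moreover have "in_lang n m (Box 1 (Var p))" using assms(1,3) by simp
  ultimately show ?thesis using nullary_if_no_maximal_unifier by blast
qed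

end
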